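(* Let $R$ be a ring. Then $R$ is feckly clean if and only if for any disjoint compact subsets $A,B$ of $\operatorname{Max}(R)$ there exists $e\in R$ such that $A\subseteq V(e)$, $B\subseteq V(1-e)$ and $eR(1-e)\subseteq J(R)$.
   Context: Rings are associative with identity, not necessarily commutative; $J(R)$ is the Jacobson radical. An element $u\in R$ is full if $RuR=R$. An element $a\in R$ is feckly clean if there exist $e\in R$ and a full element $u\in R$ with $a=e+u$ and $eR(1-e)\subseteq J(R)$; $R$ is feckly clean if every element is feckly clean. $\operatorname{Max}(R)$ is the set of all maximal (two-sided) ideals of $R$, topologized so that the closed sets are exactly the sets $V(I)=\{P\in\operatorname{Max}(R): I\subseteq P\}$ for ideals $I$ of $R$. For $a\in R$, $V(a)=V(RaR)$. *)

theory Defs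
  imports "HOL-Analysis.Analysis"
begin

definition two_sided_ideal :: "'a::ring_1 set \<Rightarrow> bool" where
  "two_sided_ideal I \<longleftrightarrow> 0 \<in> I \<and> (\<forall>x\<in>I. \<forall>y\<in>I. x + y \<in> I) \<and> (\<forall>x\<in>I. - x \<in> I)
     \<and> (\<forall>x\<in>I. \<forall>r. r * x \<in> I \<and> x * r \<in> I)"

definition left_ideal :: "'a::ring_1 set \<Rightarrow> bool" where
  "left_ideal I \<longleftrightarrow> 0 \<in> I \<and> (\<forall>x\<in>I. \<forall>y\<in>I. x + y \<in> I) \<and> (\<forall>x\<in>I. - x \<in> I)
     \<and> (\<forall>x\<in>I. \<forall>r. r * x \<in> I)"

definition maximal_left_ideal :: "'a::ring_1 set \<Rightarrow> bool" where
  "maximal_left_ideal M \<longleftrightarrow> left_ideal M \<and> M \<noteq> UNIV \<and>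
     (\<forall>I. left_ideal I \<and> M \<subseteq> I \<and> I \<noteq> UNIV \<longrightarrow> I = M)"

definition jacobson :: "'a::ring_1 set" where
  "jacobson = \<Inter>{M. maximal_left_ideal M}"

definition maximal_ideal :: "'a::ring_1 set \<Rightarrow> bool" where
  "maximal_ideal M \<longleftrightarrow> two_sided_ideal M \<and> M \<noteq> UNIV \<and>
     (\<forall>I. two_sided_ideal I \<and> M \<subseteq> I \<and> I \<noteq> UNIV \<longrightarrow> I = M)"

definition MaxSpec :: "'a::ring_1 set set" where
  "MaxSpec = {M. maximal_ideal M}"

definition RaR :: "'a::ring_1 \<Rightarrow> 'a set" where
  "RaR a = {x. \<exists>(n::nat) r s. x = (\<Sum>i<n. r i * a * s i)}"

definition full :: "'a::ring_1 \<Rightarrow> bool" where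
  "full u \<longleftrightarrow> RaR u = UNIV"

definition V :: "'a::ring_1 set \<Rightarrow> 'a set set" where
  "V I = {P \<in> MaxSpec. I \<subseteq> P}"

definition Velem :: "'a::ring_1 \<Rightarrow> 'a set set" where
  "Velem a = V (RaR a)"

text \<open>Topology on Max(R) whose closed sets are exactly the sets V(I), I an ideal;
  given via its open sets Max(R) - V(I).\<close>
definition max_topology :: "'a::ring_1 set topology" where
  "max_topology = topology_generated_by {MaxSpec - V I | I. two_sided_ideal I}"

definition feckly_clean_elem :: "'a::ring_1 \<Rightarrow> bool" where
  "feckly_clean_elem a \<longleftrightarrow> (\<exists>e u. full u \<and> a = e + u \<and>
      {e * r * (1 - e) | r. True} \<subseteq> jacobson)"

definition feckly_clean_ring :: "'a::ring_1 itself \<Rightarrow> bool" where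
  "feckly_clean_ring _ \<longleftrightarrow> (\<forall>a::'a. feckly_clean_elem a)"

end

theory Submission
  imports Defs
begin

text \<open>If \<open>eR(1 - e) \<subseteq> J(R)\<close>, then every maximal ideal is prime and contains \<open>J(R)\<close>, so it
  contains exactly one of \<open>e\<close> and \<open>1 - e\<close>: \<open>V(e)\<close> and \<open>V(1 - e)\<close> partition \<open>Max(R)\<close> into
  open sets. For two such elements, \<open>ef\<close> and \<open>e + f - ef\<close> are again of this kind and realise
  \<open>V(e) \<union> V(f)\<close> and \<open>V(e) \<inter> V(f)\<close>. An element \<open>a\<close> is feckly clean exactly when some such
  \<open>e\<close> has \<open>V(1 - a) \<subseteq> V(e)\<close> and \<open>V(a) \<subseteq> V(1 - e)\<close> (then \<open>a - e\<close> lies in no maximal ideal).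
  So the separation property, applied to the compact sets \<open>V(1 - a)\<close> and \<open>V(a)\<close>, makes \<open>R\<close>
  feckly clean. Conversely, if \<open>R\<close> is feckly clean and \<open>P \<noteq> Q\<close> are maximal, write
  \<open>1 = p + q\<close> with \<open>p \<in> P\<close>, \<open>q \<in> Q\<close>; the element attached to \<open>q\<close> separates \<open>P\<close> from \<open>Q\<close>.
  Compactness of \<open>A\<close> (finite unions) and then of \<open>B\<close> (finite intersections) turns these
  pointwise separations into one for \<open>A\<close> and \<open>B\<close>.\<close>

lemma left_ideal_zero: "left_ideal I \<Longrightarrow> 0 \<in> I"
  and left_ideal_add: "left_ideal I \<Longrightarrow> x \<in> I \<Longrightarrow> y \<in> I \<Longrightarrow> x + y \<in> I"
  and left_ideal_uminus: "left_ideal I \<Longrightarrow> x \<in> I \<Longrightarrow> - x \<in> I"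
  and left_ideal_mult_left: "left_ideal I \<Longrightarrow> x \<in> I \<Longrightarrow> r * x \<in> I"
  unfolding left_ideal_def by blast+

lemma left_ideal_one_iff: "left_ideal I \<Longrightarrow> 1 \<in> I \<longleftrightarrow> I = UNIV"
  using left_ideal_mult_left[of I 1] by auto

lemma two_sided_ideal_iff_left_ideal:
  "two_sided_ideal I \<longleftrightarrow> left_ideal I \<and> (\<forall>x\<in>I. \<forall>r. x * r \<in> I)"
  unfolding two_sided_ideal_def left_ideal_def by blast

lemma two_sided_ideal_zero: "two_sided_ideal I \<Longrightarrow> 0 \<in> I"
  and two_sided_ideal_add: "two_sided_ideal I \<Longrightarrow> x \<in> I \<Longrightarrow> y \<in> I \<Longrightarrow> x + y \<in> I"
  and two_sided_ideal_uminus: "two_sided_ideal I \<Longrightarrow> x \<in> I \<Longrightarrow> - x \<in> I"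
  and two_sided_ideal_mult_left: "two_sided_ideal I \<Longrightarrow> x \<in> I \<Longrightarrow> r * x \<in> I"
  and two_sided_ideal_mult_right: "two_sided_ideal I \<Longrightarrow> x \<in> I \<Longrightarrow> x * r \<in> I"
  unfolding two_sided_ideal_def by blast+

lemma two_sided_ideal_diff: "two_sided_ideal I \<Longrightarrow> x \<in> I \<Longrightarrow> y \<in> I \<Longrightarrow> x - y \<in> I"
  using two_sided_ideal_add[of I x "- y"] two_sided_ideal_uminus[of I y] by simp

lemma two_sided_ideal_one_iff: "two_sided_ideal I \<Longrightarrow> 1 \<in> I \<longleftrightarrow> I = UNIV"
  using two_sided_ideal_mult_left[of I 1] by auto

lemma left_ideal_Inter: "(\<And>I. I \<in> F \<Longrightarrow> left_ideal I) \<Longrightarrow> left_ideal (\<Inter>F)"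
  unfolding left_ideal_def by blast

lemma two_sided_ideal_Inter: "(\<And>I. I \<in> F \<Longrightarrow> two_sided_ideal I) \<Longrightarrow> two_sided_ideal (\<Inter>F)"
  unfolding two_sided_ideal_def by blast

lemma left_ideal_chain_Union:
  assumes "C \<noteq> {}" "subset.chain {I. left_ideal I} C"
  shows "left_ideal (\<Union>C)"
  unfolding left_ideal_def
proof (intro conjI ballI allI)
  have ideals: "\<And>I. I \<in> C \<Longrightarrow> left_ideal I" and chain: "\<And>I K. I \<in> C \<Longrightarrow> K \<in> C \<Longrightarrow> I \<subseteq> K \<or> K \<subseteq> I"
    using assms(2) by (auto simp: subset_chain_def)
  show "0 \<in> \<Union>C" using assms(1) ideals left_ideal_zero by blast
  show "x + y \<in> \<Union>C" if xy: "x \<in> \<Union>C" "y \<in> \<Union>C" for x y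
  proof -
    obtain I K where "I \<in> C" "K \<in> C" "x \<in> I" "y \<in> K" using xy by blast
    with chain[of I K] show ?thesis using ideals left_ideal_add by blast
  qed
  show "- x \<in> \<Union>C" "r * x \<in> \<Union>C" if x: "x \<in> \<Union>C" for x r
    using x ideals left_ideal_uminus left_ideal_mult_left by (meson UnionE UnionI)+
qed

lemma two_sided_ideal_chain_Union:
  assumes "C \<noteq> {}" "subset.chain {I. two_sided_ideal I} C"
  shows "two_sided_ideal (\<Union>C)"
proof -
  have "subset.chain {I. left_ideal I} C"
    using assms(2) by (auto simp: subset_chain_def two_sided_ideal_iff_left_ideal)
  then have "left_ideal (\<Union>C)" by (rule left_ideal_chain_Union[OF assms(1)])
  moreover have "\<forall>x\<in>\<Union>C. \<forall>r. x * r \<in> \<Union>C"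
    using assms(2) two_sided_ideal_mult_right by (fastforce simp: subset_chain_def)
  ultimately show ?thesis by (simp add: two_sided_ideal_iff_left_ideal)
qed

lemma exists_maximal_proper_extension:
  fixes Q :: "'a::ring_1 set \<Rightarrow> bool"
  assumes chain: "\<And>C. C \<noteq> {} \<Longrightarrow> subset.chain {I. Q I} C \<Longrightarrow> Q (\<Union>C)"
    and one: "\<And>K. Q K \<Longrightarrow> 1 \<in> K \<longleftrightarrow> K = UNIV"
    and "Q I" "I \<noteq> UNIV"
  shows "\<exists>M. Q M \<and> I \<subseteq> M \<and> M \<noteq> UNIV \<and> (\<forall>K. Q K \<and> M \<subseteq> K \<and> K \<noteq> UNIV \<longrightarrow> K = M)"
proof -
  let ?A = "{K. Q K \<and> I \<subseteq> K \<and> 1 \<notin> K}"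
  have "\<exists>M\<in>?A. \<forall>K\<in>?A. M \<subseteq> K \<longrightarrow> K = M"
  proof (rule subset_Zorn_nonempty)
    have "1 \<notin> I" using one[OF assms(3)] assms(4) by simp
    then show "?A \<noteq> {}" using assms(3) by blast
    fix C assume C: "C \<noteq> {}" "subset.chain ?A C"
    then have sub: "C \<subseteq> ?A" by (simp add: subset_chain_def)
    have "subset.chain {I. Q I} C" using C(2) by (auto simp: subset_chain_def)
    with C(1) have "Q (\<Union>C)" by (rule chain)
    moreover have "I \<subseteq> \<Union>C" using C(1) sub by blast
    moreover have "1 \<notin> \<Union>C" using sub by blast
    ultimately show "\<Union>C \<in> ?A" by simp
  qed
  then obtain M where M: "M \<in> ?A" and max: "\<forall>K\<in>?A. M \<subseteq> K \<longrightarrow> K = M"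
    by blast
  have "K = M" if K: "Q K" "M \<subseteq> K" "K \<noteq> UNIV" for K
  proof -
    have "1 \<notin> K" using one[OF K(1)] K(3) by simp
    then have "K \<in> ?A" using K(1,2) M by blast
    then show "K = M" using max K(2) by blast
  qed
  moreover have "M \<noteq> UNIV" using M by blast
  ultimately show ?thesis using M by blast
qed

lemma exists_maximal_ideal:
  assumes "two_sided_ideal I" "I \<noteq> UNIV"
  shows "\<exists>M. maximal_ideal M \<and> I \<subseteq> M"
proof -
  obtain M where "two_sided_ideal M" "I \<subseteq> M" "M \<noteq> UNIV"
    "\<forall>K. two_sided_ideal K \<and> M \<subseteq> K \<and> K \<noteq> UNIV \<longrightarrow> K = M"
    using exists_maximal_proper_extension[of two_sided_ideal, OF two_sided_ideal_chain_Union
        two_sided_ideal_one_iff assms] by blast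
  then show ?thesis unfolding maximal_ideal_def by blast
qed

lemma exists_maximal_left_ideal:
  assumes "left_ideal I" "I \<noteq> UNIV"
  shows "\<exists>M. maximal_left_ideal M \<and> I \<subseteq> M"
proof -
  obtain M where "left_ideal M" "I \<subseteq> M" "M \<noteq> UNIV"
    "\<forall>K. left_ideal K \<and> M \<subseteq> K \<and> K \<noteq> UNIV \<longrightarrow> K = M"
    using exists_maximal_proper_extension[of left_ideal, OF left_ideal_chain_Union
        left_ideal_one_iff assms] by blast
  then show ?thesis unfolding maximal_left_ideal_def by blast
qed

lemma left_ideal_sum:
  assumes "left_ideal I" "left_ideal K"
  shows "left_ideal {i + k |i k. i \<in> I \<and> k \<in> K}"
  unfolding left_ideal_def
proof (intro conjI ballI allI)
  have "(0::'a) = 0 + 0" by simp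
  then show "0 \<in> {i + k |i k. i \<in> I \<and> k \<in> K}"
    using assms left_ideal_zero by blast
  fix x y r
  assume "x \<in> {i + k |i k. i \<in> I \<and> k \<in> K}"
  then obtain i k where x: "x = i + k" "i \<in> I" "k \<in> K" by blast
  have "- x = - i + - k" "r * x = r * i + r * k"
    using x(1) by (simp_all add: distrib_left)
  then show "- x \<in> {i + k |i k. i \<in> I \<and> k \<in> K}" "r * x \<in> {i + k |i k. i \<in> I \<and> k \<in> K}"
    using x assms left_ideal_uminus left_ideal_mult_left by blast+
  assume "y \<in> {i + k |i k. i \<in> I \<and> k \<in> K}"
  then obtain i' k' where y: "y = i' + k'" "i' \<in> I" "k' \<in> K" by blast
  have "x + y = (i + i') + (k + k')"
    using x(1) y(1) by (simp add: algebra_simps)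
  then show "x + y \<in> {i + k |i k. i \<in> I \<and> k \<in> K}"
    using x y assms left_ideal_add by blast
qed

lemma two_sided_ideal_sum:
  assumes "two_sided_ideal I" "two_sided_ideal K"
  shows "two_sided_ideal {i + k |i k. i \<in> I \<and> k \<in> K}"
proof -
  have "left_ideal {i + k |i k. i \<in> I \<and> k \<in> K}"
    using assms by (intro left_ideal_sum) (simp_all add: two_sided_ideal_iff_left_ideal)
  moreover have "x * r \<in> {i + k |i k. i \<in> I \<and> k \<in> K}"
    if x: "x \<in> {i + k |i k. i \<in> I \<and> k \<in> K}" for x r
  proof -
    obtain i k where "x = i + k" "i \<in> I" "k \<in> K" using x by blast
    moreover have "x * r = i * r + k * r" using \<open>x = i + k\<close> by (simp add: distrib_right)
    ultimately show ?thesis using assms two_sided_ideal_mult_right by blast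
  qed
  ultimately show ?thesis by (simp add: two_sided_ideal_iff_left_ideal)
qed

lemma left_ideal_principal: "left_ideal (range (\<lambda>r. r * x))"
proof -
  have "0 = 0 * x" "r * x + r' * x = (r + r') * x" "- (r * x) = (- r) * x" "t * (r * x) = (t * r) * x"
    for r r' t :: 'a
    by (simp_all add: distrib_right mult.assoc)
  then show ?thesis unfolding left_ideal_def by blast
qed

lemma maximal_ideal_two_sided: "maximal_ideal P \<Longrightarrow> two_sided_ideal P"
  and maximal_ideal_one: "maximal_ideal P \<Longrightarrow> 1 \<notin> P"
  unfolding maximal_ideal_def using two_sided_ideal_one_iff by blast+

lemma maximal_ideal_eqI:
  "maximal_ideal P \<Longrightarrow> two_sided_ideal I \<Longrightarrow> P \<subseteq> I \<Longrightarrow> I \<noteq> UNIV \<Longrightarrow> I = P"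
  unfolding maximal_ideal_def by blast

text \<open>For fixed \<open>y\<close>, the \<open>x\<close> with \<open>xRy \<subseteq> P\<close> form an ideal containing \<open>P\<close>; by maximality
  it is \<open>P\<close> or everything, and it contains \<open>1\<close> only if \<open>y \<in> P\<close>.\<close>
lemma maximal_ideal_prime:
  assumes P: "maximal_ideal P" and xy: "\<forall>r. x * r * y \<in> P"
  shows "x \<in> P \<or> y \<in> P"
proof -
  have ideal: "two_sided_ideal P" using P by (rule maximal_ideal_two_sided)
  let ?T = "{z. \<forall>r. z * r * y \<in> P}"
  have "two_sided_ideal ?T"
    unfolding two_sided_ideal_def
  proof (intro conjI ballI allI)
    show "0 \<in> ?T" using two_sided_ideal_zero[OF ideal] by simp
    fix a b t assume a: "a \<in> ?T"
    show "- a \<in> ?T" using a two_sided_ideal_uminus[OF ideal] by simp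
    show "t * a \<in> ?T" using a two_sided_ideal_mult_left[OF ideal] by (simp add: mult.assoc)
    have "a * t * r * y = a * (t * r) * y" for r by (simp add: mult.assoc)
    then show "a * t \<in> ?T" using a by simp
    assume "b \<in> ?T"
    then show "a + b \<in> ?T" using a two_sided_ideal_add[OF ideal] by (simp add: distrib_right)
  qed
  moreover have "P \<subseteq> ?T"
    using two_sided_ideal_mult_right[OF ideal] by (simp add: subset_iff)
  ultimately have "?T = P \<or> ?T = UNIV"
    using maximal_ideal_eqI[OF P] by blast
  moreover have "x \<in> ?T" using xy by simp
  moreover have "1 \<notin> ?T" if "y \<notin> P" using that by (auto intro: exI[of _ 1])
  ultimately show ?thesis by blast
qed

lemma maximal_ideal_add_eq_one:
  assumes P: "maximal_ideal P" and I: "two_sided_ideal I" "\<not> I \<subseteq> P"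
  shows "\<exists>p\<in>P. \<exists>i\<in>I. p + i = 1"
proof -
  let ?S = "{p + i |p i. p \<in> P \<and> i \<in> I}"
  have ideal: "two_sided_ideal ?S"
    using two_sided_ideal_sum[OF maximal_ideal_two_sided[OF P] I(1)] .
  have "P \<subseteq> ?S"
  proof
    fix p assume "p \<in> P"
    moreover have "p = p + 0" by simp
    ultimately show "p \<in> ?S" using two_sided_ideal_zero[OF I(1)] by blast
  qed
  moreover have "?S \<noteq> P"
  proof -
    obtain i where "i \<in> I" "i \<notin> P" using I(2) by blast
    moreover have "i = 0 + i" by simp
    ultimately show ?thesis
      using two_sided_ideal_zero[OF maximal_ideal_two_sided[OF P]] by blast
  qed
  ultimately have "?S = UNIV"
    using maximal_ideal_eqI[OF P ideal] by blast
  then obtain p i where "1 = p + i" "p \<in> P" "i \<in> I"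
    using UNIV_I[of 1] by blast
  then show ?thesis by metis
qed

lemma maximal_ideals_comaximal:
  assumes P: "maximal_ideal P" and Q: "maximal_ideal Q" and "P \<noteq> Q"
  shows "\<exists>p\<in>P. \<exists>q\<in>Q. p + q = 1"
proof -
  have "P \<noteq> UNIV" using maximal_ideal_one[OF P] by blast
  then have "\<not> Q \<subseteq> P"
    using maximal_ideal_eqI[OF Q maximal_ideal_two_sided[OF P]] \<open>P \<noteq> Q\<close> by blast
  then show ?thesis
    using maximal_ideal_add_eq_one[OF P maximal_ideal_two_sided[OF Q]] by blast
qed

lemma left_ideal_jacobson: "left_ideal jacobson"
  unfolding jacobson_def by (rule left_ideal_Inter) (simp add: maximal_left_ideal_def)

text \<open>If \<open>M\<close> is a maximal left ideal, so is every proper colon ideal \<open>{r. r * s \<in> M}\<close>: a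
  left ideal \<open>I\<close> strictly above it contains an \<open>i\<close> with \<open>M + R i s\<close> the whole ring, and then
  \<open>t s = m + r i s\<close> puts \<open>t - r i\<close> in the colon ideal, so \<open>t \<in> I\<close>.\<close>
lemma maximal_left_ideal_colon:
  assumes M: "maximal_left_ideal M" and proper: "{r. r * s \<in> M} \<noteq> UNIV"
  shows "maximal_left_ideal {r. r * s \<in> M}"
proof -
  have ideal: "left_ideal M" using M by (simp add: maximal_left_ideal_def)
  let ?C = "{r. r * s \<in> M}"
  have colon: "left_ideal ?C"
    unfolding left_ideal_def
    using left_ideal_zero[OF ideal] left_ideal_add[OF ideal] left_ideal_uminus[OF ideal]
      left_ideal_mult_left[OF ideal]
    by (simp add: distrib_right mult.assoc)
  have "I = UNIV" if I: "left_ideal I" "?C \<subseteq> I" "I \<noteq> ?C" for I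
  proof -
    have "\<exists>i\<in>I. i \<notin> ?C" using I(2,3) by blast
    then obtain i where i: "i \<in> I" "i * s \<notin> M" by blast
    let ?L = "{m + k |m k. m \<in> M \<and> k \<in> range (\<lambda>r. r * (i * s))}"
    have "left_ideal ?L"
      using left_ideal_sum[OF ideal left_ideal_principal] .
    moreover have "M \<subseteq> ?L"
    proof
      fix m assume "m \<in> M"
      moreover have "m = m + 0 * (i * s)" by simp
      ultimately show "m \<in> ?L" by blast
    qed
    moreover have "i * s \<in> ?L"
    proof -
      have "i * s = 0 + 1 * (i * s)" by simp
      then show ?thesis using left_ideal_zero[OF ideal] by blast
    qed
    ultimately have L: "?L = UNIV"
      using M i(2) unfolding maximal_left_ideal_def by blast
    have "t \<in> I" for t
    proof -
      have "t * s \<in> ?L" using L by simp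
      then obtain m r where "t * s = m + r * (i * s)" "m \<in> M" by blast
      then have "t - r * i \<in> ?C" by (simp add: algebra_simps)
      then have "(t - r * i) + r * i \<in> I"
        using I(1,2) i(1) left_ideal_add left_ideal_mult_left by blast
      then show ?thesis by simp
    qed
    then show ?thesis by blast
  qed
  then show ?thesis
    using colon proper unfolding maximal_left_ideal_def by blast
qed

lemma jacobson_mult_right:
  fixes x s :: "'a::ring_1"
  assumes "x \<in> jacobson"
  shows "x * s \<in> jacobson"
  unfolding jacobson_def
proof
  fix M :: "'a set" assume "M \<in> {M. maximal_left_ideal M}"
  then have M: "maximal_left_ideal M" by simp
  show "x * s \<in> M"
  proof (cases "{r. r * s \<in> M} = UNIV")
    case False
    then have "maximal_left_ideal {r. r * s \<in> M}"
      using maximal_left_ideal_colon[OF M] by blast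
    then show ?thesis using assms unfolding jacobson_def by blast
  qed blast
qed

lemma two_sided_ideal_jacobson: "two_sided_ideal (jacobson :: 'a::ring_1 set)"
  unfolding two_sided_ideal_iff_left_ideal using left_ideal_jacobson jacobson_mult_right by blast

text \<open>Otherwise \<open>1 = p + j\<close> with \<open>p \<in> P\<close>, \<open>j \<in> J(R)\<close>, and both lie in a maximal left ideal
  containing \<open>P\<close>.\<close>
lemma jacobson_subset_maximal_ideal:
  assumes P: "maximal_ideal P"
  shows "jacobson \<subseteq> P"
proof (rule ccontr)
  assume "\<not> jacobson \<subseteq> P"
  then obtain p j where pj: "p \<in> P" "j \<in> jacobson" "p + j = 1"
    using maximal_ideal_add_eq_one[OF P two_sided_ideal_jacobson] by blast
  have "left_ideal P" "P \<noteq> UNIV"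
    using maximal_ideal_two_sided[OF P] maximal_ideal_one[OF P]
    by (auto simp: two_sided_ideal_iff_left_ideal)
  then obtain M where M: "maximal_left_ideal M" "P \<subseteq> M"
    using exists_maximal_left_ideal by blast
  have ideal: "left_ideal M" and proper: "M \<noteq> UNIV"
    using M(1) by (simp_all add: maximal_left_ideal_def)
  have "j \<in> M" using pj(2) M(1) unfolding jacobson_def by blast
  then have "p + j \<in> M" using pj(1) M(2) left_ideal_add[OF ideal] by blast
  then show False using pj(3) left_ideal_one_iff[OF ideal] proper by simp
qed

lemma RaR_add_term:
  assumes "x \<in> RaR a"
  shows "x + t * a * u \<in> RaR a"
proof -
  obtain n :: nat and r s where x: "x = (\<Sum>i<n. r i * a * s i)"
    using assms unfolding RaR_def by blast
  have "(\<Sum>i<n. (r(n := t)) i * a * (s(n := u)) i) = x"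
    unfolding x by (rule sum.cong) auto
  then have "x + t * a * u = (\<Sum>i<Suc n. (r(n := t)) i * a * (s(n := u)) i)"
    by simp
  then show ?thesis unfolding RaR_def by blast
qed

lemma RaR_add:
  assumes "x \<in> RaR a" "y \<in> RaR a"
  shows "x + y \<in> RaR a"
proof -
  obtain m :: nat and r s where y: "y = (\<Sum>i<m. r i * a * s i)"
    using assms(2) unfolding RaR_def by blast
  have "x + (\<Sum>i<k. r i * a * s i) \<in> RaR a" for k :: nat
  proof (induction k)
    case (Suc k)
    then show ?case using RaR_add_term[OF Suc, of "r k" "s k"] by (simp add: add.assoc)
  qed (use assms(1) in simp)
  then show ?thesis unfolding y .
qed

lemma two_sided_ideal_RaR: "two_sided_ideal (RaR a)"
  unfolding two_sided_ideal_def
proof (intro conjI ballI allI)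
  show "0 \<in> RaR a" unfolding RaR_def by (auto intro: exI[of _ 0])
  fix x y t assume "x \<in> RaR a"
  then obtain n :: nat and r s where x: "x = (\<Sum>i<n. r i * a * s i)"
    unfolding RaR_def by blast
  have "- x = (\<Sum>i<n. (- r i) * a * s i)"
    unfolding x by (simp add: sum_negf)
  then show "- x \<in> RaR a" unfolding RaR_def by (intro CollectI exI)
  have "t * x = (\<Sum>i<n. (t * r i) * a * s i)"
    unfolding x by (simp add: sum_distrib_left mult.assoc)
  then show "t * x \<in> RaR a" unfolding RaR_def by (intro CollectI exI)
  have "x * t = (\<Sum>i<n. r i * a * (s i * t))"
    unfolding x by (simp add: sum_distrib_right mult.assoc)
  then show "x * t \<in> RaR a" unfolding RaR_def by (intro CollectI exI)
  assume "y \<in> RaR a"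
  then show "x + y \<in> RaR a" using \<open>x \<in> RaR a\<close> by (rule RaR_add[rotated])
qed

lemma RaR_self: "a \<in> RaR a"
proof -
  have "a = (\<Sum>i<Suc 0. (\<lambda>_. 1) i * a * (\<lambda>_. 1) i)" by simp
  then show ?thesis unfolding RaR_def by (intro CollectI exI)
qed

lemma RaR_subset:
  assumes I: "two_sided_ideal I" and "a \<in> I"
  shows "RaR a \<subseteq> I"
proof
  fix x assume "x \<in> RaR a"
  then obtain n :: nat and r s where x: "x = (\<Sum>i<n. r i * a * s i)"
    unfolding RaR_def by blast
  have "(\<Sum>i<k. r i * a * s i) \<in> I" for k :: nat
  proof (induction k)
    case (Suc k)
    have "r k * a * s k \<in> I"
      using \<open>a \<in> I\<close> two_sided_ideal_mult_left[OF I] two_sided_ideal_mult_right[OF I] by blast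
    then show ?case using two_sided_ideal_add[OF I Suc] by simp
  qed (simp add: two_sided_ideal_zero[OF I])
  then show "x \<in> I" unfolding x .
qed

lemma mem_MaxSpec_iff: "P \<in> MaxSpec \<longleftrightarrow> maximal_ideal P"
  unfolding MaxSpec_def by simp

lemma mem_V_iff: "P \<in> V I \<longleftrightarrow> maximal_ideal P \<and> I \<subseteq> P"
  unfolding V_def MaxSpec_def by simp

lemma mem_Velem_iff: "P \<in> Velem a \<longleftrightarrow> maximal_ideal P \<and> a \<in> P"
  unfolding Velem_def mem_V_iff
  using RaR_self RaR_subset[OF maximal_ideal_two_sided] by blast

lemma Velem_subset_MaxSpec: "Velem a \<subseteq> MaxSpec"
  by (auto simp: mem_Velem_iff mem_MaxSpec_iff)

lemma full_iff_not_in_maximal_ideal: "full u \<longleftrightarrow> (\<forall>P. maximal_ideal P \<longrightarrow> u \<notin> P)"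
proof
  assume "full u"
  then show "\<forall>P. maximal_ideal P \<longrightarrow> u \<notin> P"
    unfolding full_def
    using RaR_subset[OF maximal_ideal_two_sided] maximal_ideal_one by blast
next
  assume none: "\<forall>P. maximal_ideal P \<longrightarrow> u \<notin> P"
  show "full u"
  proof (rule ccontr)
    assume "\<not> full u"
    then obtain P where "maximal_ideal P" "RaR u \<subseteq> P"
      using exists_maximal_ideal[OF two_sided_ideal_RaR] unfolding full_def by blast
    then show False using none RaR_self by blast
  qed
qed

definition semicentral_mod_jacobson :: "'a::ring_1 \<Rightarrow> bool" where
  "semicentral_mod_jacobson e \<longleftrightarrow> (\<forall>r. e * r * (1 - e) \<in> jacobson)"

lemma semicentral_mod_jacobson_iff_subset:
  "semicentral_mod_jacobson e \<longleftrightarrow> {e * r * (1 - e) |r. True} \<subseteq> jacobson"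
  unfolding semicentral_mod_jacobson_def by blast

lemma semicentral_mod_jacobson_zero: "semicentral_mod_jacobson 0"
  and semicentral_mod_jacobson_one: "semicentral_mod_jacobson 1"
  unfolding semicentral_mod_jacobson_def
  using two_sided_ideal_zero[OF two_sided_ideal_jacobson] by simp_all

text \<open>Since \<open>eR(1 - e) \<subseteq> J(R) \<subseteq> P\<close> and \<open>P\<close> is prime, exactly one of \<open>e\<close>, \<open>1 - e\<close> lies in \<open>P\<close>.\<close>
lemma semicentral_mod_jacobson_mem_iff:
  assumes e: "semicentral_mod_jacobson e" and P: "maximal_ideal P"
  shows "1 - e \<in> P \<longleftrightarrow> e \<notin> P"
proof -
  have "\<forall>r. e * r * (1 - e) \<in> P"
    using e jacobson_subset_maximal_ideal[OF P] unfolding semicentral_mod_jacobson_def by blast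
  then have "e \<in> P \<or> 1 - e \<in> P" by (rule maximal_ideal_prime[OF P])
  moreover have "\<not> (e \<in> P \<and> 1 - e \<in> P)"
    using two_sided_ideal_add[OF maximal_ideal_two_sided[OF P], of e "1 - e"]
      maximal_ideal_one[OF P] by auto
  ultimately show ?thesis by blast
qed

lemma Velem_one_minus:
  assumes "semicentral_mod_jacobson e"
  shows "Velem (1 - e) = MaxSpec - Velem e"
  using semicentral_mod_jacobson_mem_iff[OF assms]
  by (auto simp: mem_Velem_iff mem_MaxSpec_iff)

lemma Velem_zero: "Velem 0 = MaxSpec"
  using two_sided_ideal_zero[OF maximal_ideal_two_sided]
  by (auto simp: mem_Velem_iff mem_MaxSpec_iff)

lemma Velem_one: "Velem 1 = {}"
  by (auto simp: mem_Velem_iff dest: maximal_ideal_one)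

lemma semicentral_mod_jacobson_mult:
  assumes e1: "semicentral_mod_jacobson e1" and e2: "semicentral_mod_jacobson e2"
  shows "semicentral_mod_jacobson (e1 * e2)"
  unfolding semicentral_mod_jacobson_def
proof
  fix r
  have "e1 * (e2 * r) * (1 - e1) \<in> jacobson" "e2 * (r * e1) * (1 - e2) \<in> jacobson"
    using e1 e2 unfolding semicentral_mod_jacobson_def by blast+
  moreover have "e1 * e2 * r * (1 - e1 * e2) =
      e1 * (e2 * r) * (1 - e1) + e1 * (e2 * (r * e1) * (1 - e2))"
    by (simp add: algebra_simps)
  ultimately show "e1 * e2 * r * (1 - e1 * e2) \<in> jacobson"
    using two_sided_ideal_jacobson
    by (metis two_sided_ideal_add two_sided_ideal_mult_left)
qed

lemma semicentral_mod_jacobson_join: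
  assumes e1: "semicentral_mod_jacobson e1" and e2: "semicentral_mod_jacobson e2"
  shows "semicentral_mod_jacobson (e1 + e2 - e1 * e2)"
  unfolding semicentral_mod_jacobson_def
proof
  fix r
  have "e1 * r * (1 - e1) \<in> jacobson" "e2 * (r * (1 - e1)) * (1 - e2) \<in> jacobson"
    using e1 e2 unfolding semicentral_mod_jacobson_def by blast+
  moreover have "(e1 + e2 - e1 * e2) * r * (1 - (e1 + e2 - e1 * e2)) =
      e1 * r * (1 - e1) * (1 - e2) + (1 - e1) * (e2 * (r * (1 - e1)) * (1 - e2))"
    by (simp add: algebra_simps)
  ultimately show "(e1 + e2 - e1 * e2) * r * (1 - (e1 + e2 - e1 * e2)) \<in> jacobson"
    using two_sided_ideal_jacobson
    by (metis two_sided_ideal_add two_sided_ideal_mult_left two_sided_ideal_mult_right)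
qed

text \<open>If neither \<open>e\<^sub>1\<close> nor \<open>e\<^sub>2\<close> lies in \<open>P\<close>, then \<open>1 - e\<^sub>1, 1 - e\<^sub>2 \<in> P\<close> and
  \<open>1 = e\<^sub>1e\<^sub>2 + (1 - e\<^sub>1) + e\<^sub>1(1 - e\<^sub>2)\<close>.\<close>
lemma Velem_mult:
  assumes e1: "semicentral_mod_jacobson e1" and e2: "semicentral_mod_jacobson e2"
  shows "Velem (e1 * e2) = Velem e1 \<union> Velem e2"
proof (intro set_eqI iffI)
  fix P assume "P \<in> Velem (e1 * e2)"
  then have P: "maximal_ideal P" and prod: "e1 * e2 \<in> P" by (simp_all add: mem_Velem_iff)
  have ideal: "two_sided_ideal P" using P by (rule maximal_ideal_two_sided)
  show "P \<in> Velem e1 \<union> Velem e2"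
  proof (rule ccontr)
    assume "P \<notin> Velem e1 \<union> Velem e2"
    then have "1 - e1 \<in> P" "1 - e2 \<in> P"
      using P semicentral_mod_jacobson_mem_iff[OF e1 P] semicentral_mod_jacobson_mem_iff[OF e2 P]
      by (simp_all add: mem_Velem_iff)
    then have "e1 * e2 + (1 - e1) + e1 * (1 - e2) \<in> P"
      using prod two_sided_ideal_add[OF ideal] two_sided_ideal_mult_left[OF ideal] by metis
    moreover have "e1 * e2 + (1 - e1) + e1 * (1 - e2) = 1" by (simp add: algebra_simps)
    ultimately show False using maximal_ideal_one[OF P] by simp
  qed
next
  fix P assume "P \<in> Velem e1 \<union> Velem e2"
  then show "P \<in> Velem (e1 * e2)"
    using two_sided_ideal_mult_left[OF maximal_ideal_two_sided] two_sided_ideal_mult_right[OF maximal_ideal_two_sided]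
    by (auto simp: mem_Velem_iff)
qed

text \<open>Uses \<open>(e\<^sub>1 + e\<^sub>2 - e\<^sub>1e\<^sub>2) + (1 - e\<^sub>1)(1 - e\<^sub>2) = 1\<close>.\<close>
lemma Velem_join:
  assumes e1: "semicentral_mod_jacobson e1" and e2: "semicentral_mod_jacobson e2"
  shows "Velem (e1 + e2 - e1 * e2) = Velem e1 \<inter> Velem e2"
proof (intro set_eqI iffI)
  fix P assume "P \<in> Velem (e1 + e2 - e1 * e2)"
  then have P: "maximal_ideal P" and join: "e1 + e2 - e1 * e2 \<in> P" by (simp_all add: mem_Velem_iff)
  have ideal: "two_sided_ideal P" using P by (rule maximal_ideal_two_sided)
  show "P \<in> Velem e1 \<inter> Velem e2"
  proof (rule ccontr)
    assume "P \<notin> Velem e1 \<inter> Velem e2"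
    then have "1 - e1 \<in> P \<or> 1 - e2 \<in> P"
      using P semicentral_mod_jacobson_mem_iff[OF e1 P] semicentral_mod_jacobson_mem_iff[OF e2 P]
      by (auto simp: mem_Velem_iff)
    then have "(1 - e1) * (1 - e2) \<in> P"
      using two_sided_ideal_mult_left[OF ideal] two_sided_ideal_mult_right[OF ideal] by blast
    then have "(e1 + e2 - e1 * e2) + (1 - e1) * (1 - e2) \<in> P"
      using join two_sided_ideal_add[OF ideal] by blast
    moreover have "(e1 + e2 - e1 * e2) + (1 - e1) * (1 - e2) = 1" by (simp add: algebra_simps)
    ultimately show False using maximal_ideal_one[OF P] by simp
  qed
next
  fix P assume "P \<in> Velem e1 \<inter> Velem e2"
  then have P: "maximal_ideal P" and "e1 \<in> P" "e2 \<in> P" by (simp_all add: mem_Velem_iff)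
  have ideal: "two_sided_ideal P" using P by (rule maximal_ideal_two_sided)
  have "e1 * e2 \<in> P" using \<open>e2 \<in> P\<close> by (rule two_sided_ideal_mult_left[OF ideal])
  then have "e1 + e2 - e1 * e2 \<in> P"
    using \<open>e1 \<in> P\<close> \<open>e2 \<in> P\<close> two_sided_ideal_add[OF ideal] two_sided_ideal_diff[OF ideal] by blast
  then show "P \<in> Velem (e1 + e2 - e1 * e2)" using P by (simp add: mem_Velem_iff)
qed

lemma semicentral_mod_jacobson_finite_Union:
  assumes "finite F" "\<forall>e\<in>F. semicentral_mod_jacobson e"
  shows "\<exists>g. semicentral_mod_jacobson g \<and> Velem g = (\<Union>e\<in>F. Velem e)"
  using assms
proof (induction F rule: finite_induct)
  case empty
  show ?case using semicentral_mod_jacobson_one Velem_one by auto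
next
  case (insert e F)
  then obtain g where "semicentral_mod_jacobson g" "Velem g = (\<Union>e\<in>F. Velem e)" by auto
  moreover have "semicentral_mod_jacobson e" using insert.prems by simp
  ultimately show ?case
    using semicentral_mod_jacobson_mult Velem_mult by (metis UN_insert)
qed

lemma semicentral_mod_jacobson_finite_Inter:
  assumes "finite F" "\<forall>e\<in>F. semicentral_mod_jacobson e"
  shows "\<exists>h. semicentral_mod_jacobson h \<and> Velem h = MaxSpec \<inter> (\<Inter>e\<in>F. Velem e)"
  using assms
proof (induction F rule: finite_induct)
  case empty
  show ?case using semicentral_mod_jacobson_zero Velem_zero by auto
next
  case (insert e F)
  then obtain h where "semicentral_mod_jacobson h" "Velem h = MaxSpec \<inter> (\<Inter>e\<in>F. Velem e)" by auto
  moreover have "semicentral_mod_jacobson e" using insert.prems by simp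
  ultimately show ?case
    using semicentral_mod_jacobson_join Velem_join Velem_subset_MaxSpec by (metis INT_insert Int_left_commute)
qed

definition generated_ideal :: "'a::ring_1 set \<Rightarrow> 'a set" where
  "generated_ideal S = \<Inter>{I. two_sided_ideal I \<and> S \<subseteq> I}"

lemma two_sided_ideal_generated_ideal: "two_sided_ideal (generated_ideal S)"
  unfolding generated_ideal_def by (rule two_sided_ideal_Inter) blast

lemma generated_ideal_superset: "S \<subseteq> generated_ideal S"
  unfolding generated_ideal_def by blast

lemma generated_ideal_least: "two_sided_ideal I \<Longrightarrow> S \<subseteq> I \<Longrightarrow> generated_ideal S \<subseteq> I"
  unfolding generated_ideal_def by blast

lemma generated_ideal_mono: "S \<subseteq> T \<Longrightarrow> generated_ideal S \<subseteq> generated_ideal T"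
  unfolding generated_ideal_def by blast

text \<open>The ideals generated by finite subsets of \<open>S\<close> form a directed family whose union is
  an ideal containing \<open>S\<close>.\<close>
lemma mem_generated_ideal_finite:
  assumes "x \<in> generated_ideal S"
  shows "\<exists>F. finite F \<and> F \<subseteq> S \<and> x \<in> generated_ideal F"
proof -
  let ?D = "\<Union>{generated_ideal F |F. finite F \<and> F \<subseteq> S}"
  have mem_D: "y \<in> ?D \<longleftrightarrow> (\<exists>F. finite F \<and> F \<subseteq> S \<and> y \<in> generated_ideal F)" for y
    by blast
  note ideal = two_sided_ideal_generated_ideal
  have "two_sided_ideal ?D"
    unfolding two_sided_ideal_def
  proof (intro conjI ballI allI)
    show "0 \<in> ?D"
      unfolding mem_D using two_sided_ideal_zero[OF ideal, of "{}"] by blast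
    fix y z t assume "y \<in> ?D"
    then obtain F where F: "finite F" "F \<subseteq> S" "y \<in> generated_ideal F"
      unfolding mem_D by blast
    have "- y \<in> generated_ideal F" "t * y \<in> generated_ideal F" "y * t \<in> generated_ideal F"
      using F(3) two_sided_ideal_uminus[OF ideal] two_sided_ideal_mult_left[OF ideal]
        two_sided_ideal_mult_right[OF ideal] by auto
    then show "- y \<in> ?D" "t * y \<in> ?D" "y * t \<in> ?D"
      unfolding mem_D using F(1,2) by auto
    assume "z \<in> ?D"
    then obtain G where G: "finite G" "G \<subseteq> S" "z \<in> generated_ideal G"
      unfolding mem_D by blast
    have "y \<in> generated_ideal (F \<union> G)" "z \<in> generated_ideal (F \<union> G)"
      using F(3) G(3) generated_ideal_mono[of F "F \<union> G"] generated_ideal_mono[of G "F \<union> G"]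
      by blast+
    then have "y + z \<in> generated_ideal (F \<union> G)" by (rule two_sided_ideal_add[OF ideal])
    then show "y + z \<in> ?D"
      unfolding mem_D using F G by (intro exI[of _ "F \<union> G"]) simp
  qed
  moreover have "S \<subseteq> ?D"
  proof
    fix y assume "y \<in> S"
    then have "finite {y}" "{y} \<subseteq> S" "y \<in> generated_ideal {y}"
      using generated_ideal_superset by auto
    then show "y \<in> ?D" unfolding mem_D by blast
  qed
  ultimately have "generated_ideal S \<subseteq> ?D" by (rule generated_ideal_least)
  with assms have "x \<in> ?D" by blast
  then show ?thesis unfolding mem_D .
qed

lemma V_generated_ideal: "V (generated_ideal S) = {P \<in> MaxSpec. S \<subseteq> P}"
proof -
  have "generated_ideal S \<subseteq> P \<longleftrightarrow> S \<subseteq> P" if "maximal_ideal P" for P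
    using generated_ideal_superset generated_ideal_least[OF maximal_ideal_two_sided[OF that]]
    by blast
  then show ?thesis unfolding V_def MaxSpec_def by blast
qed

lemma V_Int:
  assumes I: "two_sided_ideal I" and K: "two_sided_ideal K"
  shows "V (I \<inter> K) = V I \<union> V K"
proof (intro set_eqI iffI)
  fix P assume "P \<in> V (I \<inter> K)"
  then have P: "maximal_ideal P" and sub: "I \<inter> K \<subseteq> P" by (simp_all add: mem_V_iff)
  show "P \<in> V I \<union> V K"
  proof (rule ccontr)
    assume "P \<notin> V I \<union> V K"
    then obtain x y where "x \<in> I" "x \<notin> P" "y \<in> K" "y \<notin> P"
      using P by (auto simp: mem_V_iff)
    moreover have "x * r * y \<in> P" for r
      using \<open>x \<in> I\<close> \<open>y \<in> K\<close> sub two_sided_ideal_mult_right[OF I] two_sided_ideal_mult_left[OF K]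
      by blast
    ultimately show False using maximal_ideal_prime[OF P] by blast
  qed
qed (auto simp: mem_V_iff)

lemma openin_max_topology_basic:
  "two_sided_ideal I \<Longrightarrow> openin max_topology (MaxSpec - V I)"
  unfolding max_topology_def openin_topology_generated_by_iff
  by (rule generate_topology_on.Basis) blast

lemma topspace_max_topology: "topspace max_topology = MaxSpec"
proof -
  have "MaxSpec - V (UNIV :: 'a set) = MaxSpec"
    unfolding V_def MaxSpec_def using maximal_ideal_one by blast
  moreover have "two_sided_ideal (UNIV :: 'a set)"
    unfolding two_sided_ideal_def by simp
  ultimately have "MaxSpec \<in> {MaxSpec - V I |I :: 'a set. two_sided_ideal I}" by force
  then show ?thesis unfolding max_topology_def topology_generated_by_topspace by blast
qed

text \<open>The basic open sets are already closed under finite intersections and arbitrary unions.\<close>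
lemma openin_max_topology_iff:
  "openin max_topology U \<longleftrightarrow> (\<exists>I. two_sided_ideal I \<and> U = MaxSpec - V I)"
proof
  assume "openin max_topology U"
  then have "generate_topology_on {MaxSpec - V I |I. two_sided_ideal I} U"
    unfolding max_topology_def openin_topology_generated_by_iff .
  then show "\<exists>I. two_sided_ideal I \<and> U = MaxSpec - V I"
  proof (induction rule: generate_topology_on.induct)
    case Empty
    have "MaxSpec - V (generated_ideal {}) = {}" by (simp add: V_generated_ideal)
    then show ?case using two_sided_ideal_generated_ideal by metis
  next
    case (Int U1 U2)
    then obtain I1 I2 where "two_sided_ideal I1" "U1 = MaxSpec - V I1"
      "two_sided_ideal I2" "U2 = MaxSpec - V I2" by blast
    moreover have "two_sided_ideal (I1 \<inter> I2)"
      using two_sided_ideal_Inter[of "{I1, I2}"] calculation by auto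
    ultimately show ?case using V_Int by (metis Diff_Un)
  next
    case (UN \<U>)
    then obtain K where K: "\<And>U. U \<in> \<U> \<Longrightarrow> two_sided_ideal (K U) \<and> U = MaxSpec - V (K U)"
      by metis
    have "P \<in> U \<longleftrightarrow> P \<in> MaxSpec \<and> \<not> K U \<subseteq> P" if "U \<in> \<U>" for U P
      using K[OF that] unfolding V_def by blast
    then have "MaxSpec - V (generated_ideal (\<Union>U\<in>\<U>. K U)) = \<Union>\<U>"
      unfolding V_generated_ideal by blast
    then show ?case using two_sided_ideal_generated_ideal by metis
  qed blast
qed (use openin_max_topology_basic in blast)

text \<open>If no finite subfamily covers, then \<open>1\<close> is not in the ideal generated by \<open>I\<close> and the
  ideals belonging to the cover, and a maximal ideal containing it escapes the cover.\<close>
lemma compactin_V: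
  assumes I: "two_sided_ideal I"
  shows "compactin max_topology (V I)"
  unfolding compactin_def
proof (intro conjI allI impI)
  show "V I \<subseteq> topspace max_topology"
    unfolding topspace_max_topology V_def by blast
  fix \<U> assume \<U>: "(\<forall>U\<in>\<U>. openin max_topology U) \<and> V I \<subseteq> \<Union>\<U>"
  then obtain K where K: "\<And>U. U \<in> \<U> \<Longrightarrow> two_sided_ideal (K U) \<and> U = MaxSpec - V (K U)"
    unfolding openin_max_topology_iff by metis
  have mem_U: "P \<in> U \<longleftrightarrow> maximal_ideal P \<and> \<not> K U \<subseteq> P" if "U \<in> \<U>" for U P
    using K[OF that] unfolding V_def MaxSpec_def by blast
  have V_cover: "V I \<subseteq> \<Union>\<F>" if "\<F> \<subseteq> \<U>" "1 \<in> generated_ideal (I \<union> (\<Union>U\<in>\<F>. K U))" for \<F>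
  proof
    fix P assume "P \<in> V I"
    then have P: "maximal_ideal P" "I \<subseteq> P" by (simp_all add: mem_V_iff)
    show "P \<in> \<Union>\<F>"
    proof (rule ccontr)
      assume "P \<notin> \<Union>\<F>"
      then have "K U \<subseteq> P" if "U \<in> \<F>" for U
        using mem_U[of U P] that \<open>\<F> \<subseteq> \<U>\<close> P(1) by blast
      then have "generated_ideal (I \<union> (\<Union>U\<in>\<F>. K U)) \<subseteq> P"
        using P(2) by (intro generated_ideal_least[OF maximal_ideal_two_sided[OF P(1)]]) blast
      then show False using that(2) maximal_ideal_one[OF P(1)] by blast
    qed
  qed
  have "1 \<in> generated_ideal (I \<union> (\<Union>U\<in>\<U>. K U))"
  proof (rule ccontr)
    assume "1 \<notin> generated_ideal (I \<union> (\<Union>U\<in>\<U>. K U))"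
    then have "generated_ideal (I \<union> (\<Union>U\<in>\<U>. K U)) \<noteq> UNIV" by auto
    then obtain P where P: "maximal_ideal P" "generated_ideal (I \<union> (\<Union>U\<in>\<U>. K U)) \<subseteq> P"
      using exists_maximal_ideal[OF two_sided_ideal_generated_ideal] by blast
    have "I \<union> (\<Union>U\<in>\<U>. K U) \<subseteq> P"
      using generated_ideal_superset P(2) by (rule subset_trans)
    then have "I \<subseteq> P" and K_sub: "\<And>U. U \<in> \<U> \<Longrightarrow> K U \<subseteq> P" by blast+
    with P(1) have "P \<in> V I" by (simp add: mem_V_iff)
    then obtain U where "U \<in> \<U>" "P \<in> U" using \<U> by blast
    then show False using mem_U K_sub by blast
  qed
  then obtain F where F: "finite F" "F \<subseteq> I \<union> (\<Union>U\<in>\<U>. K U)" "1 \<in> generated_ideal F"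
    using mem_generated_ideal_finite by blast
  obtain \<F> where \<F>: "finite \<F>" "\<F> \<subseteq> \<U>" "F \<subseteq> I \<union> (\<Union>U\<in>\<F>. K U)"
  proof -
    have "\<forall>x\<in>F. x \<in> I \<or> (\<exists>U\<in>\<U>. x \<in> K U)" using F(2) by blast
    then obtain pick where "\<forall>x\<in>F. x \<in> I \<or> (pick x \<in> \<U> \<and> x \<in> K (pick x))" by metis
    then show thesis
      using F(1) by (intro that[of "pick ` {x\<in>F. x \<notin> I}"]) auto
  qed
  then have "1 \<in> generated_ideal (I \<union> (\<Union>U\<in>\<F>. K U))"
    using F(3) generated_ideal_mono by blast
  then show "\<exists>\<F>. finite \<F> \<and> \<F> \<subseteq> \<U> \<and> V I \<subseteq> \<Union>\<F>"
    using V_cover \<F> by blast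
qed

lemma compactin_Velem: "compactin max_topology (Velem a)"
  unfolding Velem_def by (rule compactin_V[OF two_sided_ideal_RaR])

lemma openin_MaxSpec_diff_Velem: "openin max_topology (MaxSpec - Velem a)"
  unfolding Velem_def by (rule openin_max_topology_basic[OF two_sided_ideal_RaR])

lemma openin_Velem:
  assumes "semicentral_mod_jacobson e"
  shows "openin max_topology (Velem e)"
proof -
  have "Velem e = MaxSpec - Velem (1 - e)"
    using Velem_one_minus[OF assms] Velem_subset_MaxSpec by blast
  then show ?thesis using openin_MaxSpec_diff_Velem by metis
qed

lemma Velem_one_minus_disjoint: "Velem (1 - a) \<inter> Velem a = {}"
proof -
  have False if P: "maximal_ideal P" and "1 - a \<in> P" "a \<in> P" for P
  proof -
    have "(1 - a) + a \<in> P"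
      using that(2,3) by (rule two_sided_ideal_add[OF maximal_ideal_two_sided[OF P]])
    then show False using maximal_ideal_one[OF P] by simp
  qed
  then show ?thesis by (auto simp: mem_Velem_iff)
qed

text \<open>If \<open>a = e + u\<close> with \<open>u\<close> full, no maximal ideal contains \<open>u = (1 - e) - (1 - a) = a - e\<close>;
  conversely such an \<open>e\<close> makes \<open>a - e\<close> full.\<close>
lemma feckly_clean_elem_iff:
  "feckly_clean_elem a \<longleftrightarrow>
    (\<exists>e. semicentral_mod_jacobson e \<and> Velem (1 - a) \<subseteq> Velem e \<and> Velem a \<subseteq> Velem (1 - e))"
proof
  assume "feckly_clean_elem a"
  then obtain e u where u: "full u" and a: "a = e + u" and e: "semicentral_mod_jacobson e"
    unfolding feckly_clean_elem_def semicentral_mod_jacobson_iff_subset by blast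
  have u_eq: "u = (1 - e) - (1 - a)" "u = a - e" using a by (simp_all add: algebra_simps)
  have "e \<in> P" if P: "maximal_ideal P" and "1 - a \<in> P" for P
  proof (rule ccontr)
    assume "e \<notin> P"
    then have "1 - e \<in> P" using semicentral_mod_jacobson_mem_iff[OF e P] by blast
    then have "u \<in> P"
      unfolding u_eq(1) using that(2) by (rule two_sided_ideal_diff[OF maximal_ideal_two_sided[OF P]])
    then show False using u P by (simp add: full_iff_not_in_maximal_ideal)
  qed
  moreover have "1 - e \<in> P" if P: "maximal_ideal P" and "a \<in> P" for P
  proof (rule ccontr)
    assume "1 - e \<notin> P"
    then have "e \<in> P" using semicentral_mod_jacobson_mem_iff[OF e P] by blast
    with that(2) have "u \<in> P"
      unfolding u_eq(2) by (rule two_sided_ideal_diff[OF maximal_ideal_two_sided[OF P]])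
    then show False using u P by (simp add: full_iff_not_in_maximal_ideal)
  qed
  ultimately show "\<exists>e. semicentral_mod_jacobson e \<and> Velem (1 - a) \<subseteq> Velem e \<and> Velem a \<subseteq> Velem (1 - e)"
    using e by (auto simp: mem_Velem_iff)
next
  assume "\<exists>e. semicentral_mod_jacobson e \<and> Velem (1 - a) \<subseteq> Velem e \<and> Velem a \<subseteq> Velem (1 - e)"
  then obtain e where e: "semicentral_mod_jacobson e"
    and sub: "Velem (1 - a) \<subseteq> Velem e" "Velem a \<subseteq> Velem (1 - e)" by blast
  have "a - e \<notin> P" if P: "maximal_ideal P" for P
  proof
    assume ae: "a - e \<in> P"
    note ideal = maximal_ideal_two_sided[OF P]
    show False
    proof (cases "e \<in> P")
      case True
      then have "(a - e) + e \<in> P" using ae by (intro two_sided_ideal_add[OF ideal])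
      then have "P \<in> Velem a" using P by (simp add: mem_Velem_iff)
      then have "1 - e \<in> P" using sub(2) by (simp add: subset_iff mem_Velem_iff)
      then show False using True semicentral_mod_jacobson_mem_iff[OF e P] by blast
    next
      case False
      then have "1 - e \<in> P" using semicentral_mod_jacobson_mem_iff[OF e P] by blast
      then have "(1 - e) - (a - e) \<in> P" using ae by (rule two_sided_ideal_diff[OF ideal])
      then have "P \<in> Velem (1 - a)" using P by (simp add: mem_Velem_iff)
      then show False using False sub(1) by (auto simp: mem_Velem_iff)
    qed
  qed
  then have "full (a - e)" by (simp add: full_iff_not_in_maximal_ideal)
  moreover have "a = e + (a - e)" by simp
  ultimately show "feckly_clean_elem a"
    using e unfolding feckly_clean_elem_def semicentral_mod_jacobson_iff_subset by blast
qed

lemma feckly_clean_separates_maximal_ideals: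
  assumes fc: "feckly_clean_ring TYPE('a::ring_1)"
    and P: "maximal_ideal (P :: 'a set)" and Q: "maximal_ideal Q" and "P \<noteq> Q"
  shows "\<exists>e. semicentral_mod_jacobson e \<and> P \<in> Velem e \<and> Q \<notin> Velem e"
proof -
  obtain p q where pq: "p \<in> P" "q \<in> Q" "p + q = 1"
    using maximal_ideals_comaximal[OF P Q \<open>P \<noteq> Q\<close>] by blast
  have "feckly_clean_elem q" using fc unfolding feckly_clean_ring_def by blast
  then obtain e where e: "semicentral_mod_jacobson e"
    and sub: "Velem (1 - q) \<subseteq> Velem e" "Velem q \<subseteq> Velem (1 - e)"
    unfolding feckly_clean_elem_iff by blast
  have "1 - q = p" using pq(3) by (simp add: algebra_simps)
  then have "P \<in> Velem e" using sub(1) P pq(1) by (auto simp: mem_Velem_iff)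
  moreover have "Q \<in> Velem (1 - e)" using sub(2) Q pq(2) by (auto simp: mem_Velem_iff)
  then have "Q \<notin> Velem e" using Velem_one_minus_disjoint[of e] by (auto simp: mem_Velem_iff)
  ultimately show ?thesis using e by blast
qed

lemma compactin_pointwise_subcover:
  assumes "compactin X A" and U: "\<And>x. x \<in> A \<Longrightarrow> openin X (U x) \<and> x \<in> U x"
  shows "\<exists>F. finite F \<and> F \<subseteq> A \<and> A \<subseteq> (\<Union>x\<in>F. U x)"
proof -
  have "\<forall>V\<in>U ` A. openin X V" "A \<subseteq> \<Union>(U ` A)" using U by blast+
  then obtain \<F> where \<F>: "finite \<F>" "\<F> \<subseteq> U ` A" "A \<subseteq> \<Union>\<F>"
    using assms(1) unfolding compactin_def by meson
  then obtain F where "F \<subseteq> A" "finite F" "\<F> = U ` F"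
    using finite_subset_image[OF \<F>(1,2)] by blast
  then show ?thesis using \<F>(3) by blast
qed

lemma semicentral_separates_compact_point:
  assumes A: "compactin max_topology A"
    and sep: "\<And>P. P \<in> A \<Longrightarrow> \<exists>e. semicentral_mod_jacobson e \<and> P \<in> Velem e \<and> Q \<notin> Velem e"
  shows "\<exists>g. semicentral_mod_jacobson g \<and> A \<subseteq> Velem g \<and> Q \<notin> Velem g"
proof -
  obtain e where e: "\<And>P. P \<in> A \<Longrightarrow> semicentral_mod_jacobson (e P) \<and> P \<in> Velem (e P) \<and> Q \<notin> Velem (e P)"
    using sep by metis
  then have "\<And>P. P \<in> A \<Longrightarrow> openin max_topology (Velem (e P)) \<and> P \<in> Velem (e P)"
    using openin_Velem by blast
  from compactin_pointwise_subcover[OF A this]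
  obtain F where F: "finite F" "F \<subseteq> A" "A \<subseteq> (\<Union>P\<in>F. Velem (e P))" by blast
  have "\<forall>f\<in>e ` F. semicentral_mod_jacobson f" using F(2) e by blast
  then obtain g where g: "semicentral_mod_jacobson g" "Velem g = (\<Union>f\<in>e ` F. Velem f)"
    using semicentral_mod_jacobson_finite_Union[of "e ` F"] F(1) by blast
  have "A \<subseteq> Velem g" using F(3) g(2) by simp
  moreover have "Q \<notin> Velem g" using g(2) F(2) e by auto
  ultimately show ?thesis using g(1) by blast
qed

text \<open>First separate \<open>A\<close> from each point of \<open>B\<close>, then use compactness of \<open>B\<close> and intersect.\<close>
lemma semicentral_separates_compacts:
  assumes A: "compactin max_topology A" and B: "compactin max_topology B"
    and sep: "\<And>P Q. P \<in> A \<Longrightarrow> Q \<in> B \<Longrightarrow> \<exists>e. semicentral_mod_jacobson e \<and> P \<in> Velem e \<and> Q \<notin> Velem e"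
  shows "\<exists>h. semicentral_mod_jacobson h \<and> A \<subseteq> Velem h \<and> B \<subseteq> Velem (1 - h)"
proof -
  have "\<exists>g. semicentral_mod_jacobson g \<and> A \<subseteq> Velem g \<and> Q \<notin> Velem g" if "Q \<in> B" for Q
    using semicentral_separates_compact_point[OF A sep[OF _ that]] .
  then obtain g where g: "\<And>Q. Q \<in> B \<Longrightarrow> semicentral_mod_jacobson (g Q) \<and> A \<subseteq> Velem (g Q) \<and> Q \<notin> Velem (g Q)"
    by metis
  have "B \<subseteq> MaxSpec" using compactin_subset_topspace[OF B] by (simp add: topspace_max_topology)
  then have "\<And>Q. Q \<in> B \<Longrightarrow> openin max_topology (MaxSpec - Velem (g Q)) \<and> Q \<in> MaxSpec - Velem (g Q)"
    using g openin_MaxSpec_diff_Velem by blast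
  from compactin_pointwise_subcover[OF B this]
  obtain G where G: "finite G" "G \<subseteq> B" "B \<subseteq> (\<Union>Q\<in>G. MaxSpec - Velem (g Q))" by blast
  have "\<forall>f\<in>g ` G. semicentral_mod_jacobson f" using G(2) g by blast
  then obtain h where h: "semicentral_mod_jacobson h" "Velem h = MaxSpec \<inter> (\<Inter>f\<in>g ` G. Velem f)"
    using semicentral_mod_jacobson_finite_Inter[of "g ` G"] G(1) by blast
  have "A \<subseteq> MaxSpec" using compactin_subset_topspace[OF A] by (simp add: topspace_max_topology)
  moreover have "A \<subseteq> Velem (g Q)" if "Q \<in> G" for Q using g G(2) that by blast
  ultimately have "A \<subseteq> Velem h" unfolding h(2) by blast
  moreover have "B \<subseteq> Velem (1 - h)"
    unfolding Velem_one_minus[OF h(1)] h(2) using G(3) by blast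
  ultimately show ?thesis using h(1) by blast
qed

theorem corollary2p4:
  shows "feckly_clean_ring TYPE('a::ring_1) \<longleftrightarrow>
    (\<forall>A B. compactin (max_topology :: 'a set topology) A \<and> compactin max_topology B \<and> A \<inter> B = {}
       \<longrightarrow> (\<exists>e::'a. A \<subseteq> Velem e \<and> B \<subseteq> Velem (1 - e) \<and>
              {e * r * (1 - e) | r. True} \<subseteq> jacobson))"
  unfolding semicentral_mod_jacobson_iff_subset[symmetric]
proof (intro iffI allI impI)
  fix A B :: "'a set set"
  assume fc: "feckly_clean_ring TYPE('a)"
    and AB: "compactin max_topology A \<and> compactin max_topology B \<and> A \<inter> B = {}"
  have "\<exists>e. semicentral_mod_jacobson e \<and> P \<in> Velem e \<and> Q \<notin> Velem e" if "P \<in> A" "Q \<in> B" for P Q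
  proof (rule feckly_clean_separates_maximal_ideals[OF fc])
    show "maximal_ideal P" "maximal_ideal Q"
      using that AB compactin_subset_topspace
      by (fastforce simp: topspace_max_topology mem_MaxSpec_iff)+
    show "P \<noteq> Q" using that AB by blast
  qed
  then show "\<exists>e. A \<subseteq> Velem e \<and> B \<subseteq> Velem (1 - e) \<and> semicentral_mod_jacobson e"
    using semicentral_separates_compacts AB by blast
next
  assume sep: "\<forall>A B. compactin (max_topology :: 'a set topology) A \<and> compactin max_topology B \<and> A \<inter> B = {}
    \<longrightarrow> (\<exists>e. A \<subseteq> Velem e \<and> B \<subseteq> Velem (1 - e) \<and> semicentral_mod_jacobson e)"
  show "feckly_clean_ring TYPE('a)"
    unfolding feckly_clean_ring_def feckly_clean_elem_iff
    using sep compactin_Velem Velem_one_minus_disjoint by blast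
qed

end
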